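(* Let $X$ be a set of pointed Kripke models, $\Lambda$ a normal modal logic sound with respect to $X$, and $D\subseteq\boldsymbol{\mathcal{L}}_{\Lambda}$ a descriptor. If $\Lambda$ is compact and $D$ is $\Lambda$-representative, then $[\boldsymbol{\varphi}]_D$ is clopen in $\mathcal{T}_D$ for every $\boldsymbol{\varphi}\in\boldsymbol{\mathcal{L}}_{\Lambda}$. If moreover $X$ is saturated with respect to $D$, then $\mathcal{T}_D$ reflects $\Lambda$.
   Context: Signature: countable non-empty sets $\Phi$, $\mathcal{I}$; $\mathcal{L}$: $\varphi ::= \top\mid p\mid\neg\varphi\mid\varphi\wedge\varphi\mid\Box_i\varphi$ on pointed Kripke models, standard semantics. $\boldsymbol{\varphi}$: formulas $\Lambda$-provably equivalent to $\varphi$; $\boldsymbol{\mathcal{L}}_{\Lambda}=\{\boldsymbol{\varphi}\}$. $\Lambda$ is compact if a set of formulas is $\Lambda$-consistent iff all its finite subsets are. For $D\subseteq\boldsymbol{\mathcal{L}}_{\Lambda}$: $\boldsymbol{x}_D=\{y\in X:\forall\boldsymbol{\varphi}\in D,\ y\models\varphi\iff x\models\varphi\}$, $X_D=\{\boldsymbol{x}_D:x\in X\}$; $\mathcal{T}_D$ is generated by the subbasis $\{\boldsymbol{x}:x\models\varphi\}$, $\{\boldsymbol{x}:x\models\neg\varphi\}$, $\boldsymbol{\varphi}\in D$. $D$ is $\Lambda$-representative if for every $\varphi\in\mathcal{L}$ there is $\{\boldsymbol{\psi}_i\}_{i\in I}\subseteq D$ such that for every $J\subseteq I$, $\{\psi_i\}_{i\in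 J}\cup\{\neg\psi_i\}_{i\in I\setminus J}$ $\Lambda$-entails $\varphi$ or $\neg\varphi$. $X$ is saturated w.r.t. $D$ if for all $Y,Y'\subseteq D$ with $B=\{\varphi:\boldsymbol{\varphi}\in Y\}\cup\{\neg\varphi:\boldsymbol{\varphi}\in Y'\}$ $\Lambda$-consistent, some $x\in X$ satisfies all of $B$. For $\boldsymbol{\varphi}\in\boldsymbol{\mathcal{L}}_{\Lambda}$, $[\boldsymbol{\varphi}]_D=\{\boldsymbol{x}\in X_D:\forall x\in\boldsymbol{x},\ x\models\varphi\}$. $\mathcal{T}_D$ reflects $\Lambda$ if for every $Y\subseteq X_D$: $Y$ is clopen in $\mathcal{T}_D$ iff $Y=[\boldsymbol{\varphi}]_D$ for some $\boldsymbol{\varphi}\in\boldsymbol{\mathcal{L}}_{\Lambda}$. *)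

theory Defs
  imports "HOL-Analysis.Analysis" "HOL-Library.Countable"
begin

datatype ('p, 'i) form =
    Top
  | Atom 'p
  | Neg "('p, 'i) form"
  | Conj "('p, 'i) form" "('p, 'i) form"
  | Box 'i "('p, 'i) form"

definition Disj :: "('p,'i) form \<Rightarrow> ('p,'i) form \<Rightarrow> ('p,'i) form" where
  "Disj a b = Neg (Conj (Neg a) (Neg b))"
definition Imp :: "('p,'i) form \<Rightarrow> ('p,'i) form \<Rightarrow> ('p,'i) form" where
  "Imp a b = Neg (Conj a (Neg b))"
definition Iff :: "('p,'i) form \<Rightarrow> ('p,'i) form \<Rightarrow> ('p,'i) form" where
  "Iff a b = Conj (Imp a b) (Imp b a)"

fun conj_list :: "('p,'i) form list \<Rightarrow> ('p,'i) form" where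
  "conj_list [] = Top"
| "conj_list (a # as) = Conj a (conj_list as)"

type_synonym ('w, 'p, 'i) kmodel = "('i \<Rightarrow> 'w \<Rightarrow> 'w \<Rightarrow> bool) \<times> ('p \<Rightarrow> 'w \<Rightarrow> bool)"
type_synonym ('w, 'p, 'i) pointed = "('w, 'p, 'i) kmodel \<times> 'w"

fun sat :: "('w, 'p, 'i) kmodel \<Rightarrow> 'w \<Rightarrow> ('p, 'i) form \<Rightarrow> bool" where
  "sat M w Top = True"
| "sat M w (Atom p) = snd M p w"
| "sat M w (Neg a) = (\<not> sat M w a)"
| "sat M w (Conj a b) = (sat M w a \<and> sat M w b)"
| "sat M w (Box i a) = (\<forall>v. fst M i w v \<longrightarrow> sat M v a)"

definition psat :: "('w, 'p, 'i) pointed \<Rightarrow> ('p, 'i) form \<Rightarrow> bool" where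
  "psat x a = sat (fst x) (snd x) a"

fun peval :: "(('p,'i) form \<Rightarrow> bool) \<Rightarrow> ('p,'i) form \<Rightarrow> bool" where
  "peval v Top = True"
| "peval v (Atom p) = v (Atom p)"
| "peval v (Neg a) = (\<not> peval v a)"
| "peval v (Conj a b) = (peval v a \<and> peval v b)"
| "peval v (Box i a) = v (Box i a)"

definition tautology :: "('p,'i) form \<Rightarrow> bool" where
  "tautology a = (\<forall>v. peval v a)"

fun subst :: "('p \<Rightarrow> ('p,'i) form) \<Rightarrow> ('p,'i) form \<Rightarrow> ('p,'i) form" where
  "subst s Top = Top"
| "subst s (Atom p) = s p"
| "subst s (Neg a) = Neg (subst s a)"
| "subst s (Conj a b) = Conj (subst s a) (subst s b)"
| "subst s (Box i a) = Box i (subst s a)"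

definition normal_logic :: "('p,'i) form set \<Rightarrow> bool" where
  "normal_logic L \<longleftrightarrow>
     (\<forall>a. tautology a \<longrightarrow> a \<in> L) \<and>
     (\<forall>i a b. Imp (Box i (Imp a b)) (Imp (Box i a) (Box i b)) \<in> L) \<and>
     (\<forall>a b. a \<in> L \<longrightarrow> Imp a b \<in> L \<longrightarrow> b \<in> L) \<and>
     (\<forall>i a. a \<in> L \<longrightarrow> Box i a \<in> L) \<and>
     (\<forall>s a. a \<in> L \<longrightarrow> subst s a \<in> L)"

definition eqc :: "('p,'i) form set \<Rightarrow> ('p,'i) form \<Rightarrow> ('p,'i) form set" where
  "eqc L a = {b. Iff a b \<in> L}"

definition Lbold :: "('p,'i) form set \<Rightarrow> ('p,'i) form set set" where
  "Lbold L = range (eqc L)"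

definition consistent :: "('p,'i) form set \<Rightarrow> ('p,'i) form set \<Rightarrow> bool" where
  "consistent L G \<longleftrightarrow> \<not> (\<exists>as. set as \<subseteq> G \<and> Neg (conj_list as) \<in> L)"

definition entails :: "('p,'i) form set \<Rightarrow> ('p,'i) form set \<Rightarrow> ('p,'i) form \<Rightarrow> bool" where
  "entails L G a \<longleftrightarrow> (\<exists>as. set as \<subseteq> G \<and> Imp (conj_list as) a \<in> L)"

definition compact_logic :: "('p,'i) form set \<Rightarrow> bool" where
  "compact_logic L \<longleftrightarrow>
     (\<forall>G. consistent L G \<longleftrightarrow> (\<forall>G0. G0 \<subseteq> G \<and> finite G0 \<longrightarrow> consistent L G0))"

definition sound_wrt :: "('p,'i) form set \<Rightarrow> ('w,'p,'i) pointed set \<Rightarrow> bool" where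
  "sound_wrt L X \<longleftrightarrow> (\<forall>a\<in>L. \<forall>x\<in>X. psat x a)"

definition cls :: "('p,'i) form set \<Rightarrow> ('w,'p,'i) pointed set \<Rightarrow> ('p,'i) form set set
                   \<Rightarrow> ('w,'p,'i) pointed \<Rightarrow> ('w,'p,'i) pointed set" where
  "cls L X D x = {y \<in> X. \<forall>a. eqc L a \<in> D \<longrightarrow> (psat y a \<longleftrightarrow> psat x a)}"

definition XD :: "('p,'i) form set \<Rightarrow> ('w,'p,'i) pointed set \<Rightarrow> ('p,'i) form set set
                   \<Rightarrow> ('w,'p,'i) pointed set set" where
  "XD L X D = cls L X D ` X"

definition sbset :: "('p,'i) form set \<Rightarrow> ('w,'p,'i) pointed set \<Rightarrow> ('p,'i) form set set
                   \<Rightarrow> ('p,'i) form \<Rightarrow> ('w,'p,'i) pointed set set" where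
  "sbset L X D a = {cls L X D x | x. x \<in> X \<and> psat x a}"

text \<open>The topology on \<open>X_D\<close> generated by the subbasis; the whole space \<open>X_D\<close> is added
  to the generating family so that the carrier is \<open>X_D\<close> (this changes nothing when
  \<open>D\<close> is nonempty).\<close>
definition TD :: "('p,'i) form set \<Rightarrow> ('w,'p,'i) pointed set \<Rightarrow> ('p,'i) form set set
                   \<Rightarrow> ('w,'p,'i) pointed set topology" where
  "TD L X D = topology_generated_by
     (insert (XD L X D) {S. \<exists>a. eqc L a \<in> D \<and> (S = sbset L X D a \<or> S = sbset L X D (Neg a))})"

definition denot :: "('p,'i) form set \<Rightarrow> ('w,'p,'i) pointed set \<Rightarrow> ('p,'i) form set set
                   \<Rightarrow> ('p,'i) form \<Rightarrow> ('w,'p,'i) pointed set set" where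
  "denot L X D a = {c \<in> XD L X D. \<forall>x\<in>c. psat x a}"

definition clopen_in :: "'a topology \<Rightarrow> 'a set \<Rightarrow> bool" where
  "clopen_in T Y \<longleftrightarrow> openin T Y \<and> closedin T Y"

definition representative :: "('p,'i) form set \<Rightarrow> ('p,'i) form set set \<Rightarrow> bool" where
  "representative L D \<longleftrightarrow>
     (\<forall>a. \<exists>S \<subseteq> D. \<forall>J \<subseteq> S.
        (let B = {b. eqc L b \<in> J} \<union> {Neg b | b. eqc L b \<in> S - J}
         in entails L B a \<or> entails L B (Neg a)))"

definition saturated :: "('p,'i) form set \<Rightarrow> ('w,'p,'i) pointed set \<Rightarrow> ('p,'i) form set set \<Rightarrow> bool" where
  "saturated L X D \<longleftrightarrow>
     (\<forall>Y Y'. Y \<subseteq> D \<longrightarrow> Y' \<subseteq> D \<longrightarrow>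
        (let B = {b. eqc L b \<in> Y} \<union> {Neg b | b. eqc L b \<in> Y'}
         in consistent L B \<longrightarrow> (\<exists>x\<in>X. \<forall>b\<in>B. psat x b)))"

definition reflects :: "('p,'i) form set \<Rightarrow> ('w,'p,'i) pointed set \<Rightarrow> ('p,'i) form set set \<Rightarrow> bool" where
  "reflects L X D \<longleftrightarrow>
     (\<forall>Y. Y \<subseteq> XD L X D \<longrightarrow> (clopen_in (TD L X D) Y \<longleftrightarrow> (\<exists>a. Y = denot L X D a)))"

end

theory Submission imports Defs begin

text \<open>
  Representativity says that at every point x of X the truth value of a formula is settled,
  modulo \<Lambda>, by finitely many D-literals true at x. By soundness their conjunction denotes a
  basic open neighbourhood of the class of x on which the formula is constant; so every
  denotation is open, and so is its complement, the denotation of the negation.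

  For reflection, take a cover of X_D by subbasic sets without finite subcover. The negations
  of the covering literals are finitely satisfiable in X, hence \<Lambda>-consistent by compactness
  of \<Lambda>, hence realised at a point of X by saturation, and that point escapes the cover. By the
  Alexander subbase theorem T_D is compact, so a clopen set is compact, hence a finite union of
  the denotations it contains, i.e. the denotation of their disjunction.
\<close>

declare split_paired_All [simp del] split_paired_Ex [simp del]

lemma topology_generated_by_eq_subbase:
  "topology_generated_by S =
     topology (arbitrary union_of (finite intersection_of (\<lambda>x. x \<in> S) relative_to \<Union>S))"
  (is "_ = ?T")
proof (subst topology_eq, intro allI iffI)
  fix U assume "openin (topology_generated_by S) U"
  then have "generate_topology_on S U"
    by (rule openin_topology_generated_by)
  then show "openin ?T U"
  proof induction
    case (Basis s)
    then show ?case unfolding openin_subbase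
      by (intro arbitrary_union_of_inc relative_to_subset_inc finite_intersection_of_inc) auto
  qed (auto intro: openin_Int openin_Union)
next
  fix U assume "openin ?T U"
  then show "openin (topology_generated_by S) U"
    by (rule minimal_topology_subbase[rotated 2])
       (auto intro: topology_generated_by_Basis simp flip: topology_generated_by_topspace)
qed

lemma compact_space_topology_generated_by:
  assumes "\<And>C. C \<subseteq> S \<Longrightarrow> \<Union>C = \<Union>S \<Longrightarrow> \<exists>C'. finite C' \<and> C' \<subseteq> C \<and> \<Union>C' = \<Union>S"
  shows "compact_space (topology_generated_by S)"
  by (rule Alexander_subbase[OF topology_generated_by_eq_subbase[symmetric]]) (use assms in simp)

lemma psat_simps [simp]:
  "psat x Top"
  "psat x (Neg a) \<longleftrightarrow> \<not> psat x a"
  "psat x (Conj a b) \<longleftrightarrow> psat x a \<and> psat x b"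
  "psat x (Disj a b) \<longleftrightarrow> psat x a \<or> psat x b"
  "psat x (Imp a b) \<longleftrightarrow> (psat x a \<longrightarrow> psat x b)"
  "psat x (Iff a b) \<longleftrightarrow> (psat x a \<longleftrightarrow> psat x b)"
  by (auto simp: psat_def Disj_def Imp_def Iff_def)

lemma psat_conj_list [simp]: "psat x (conj_list as) \<longleftrightarrow> (\<forall>b\<in>set as. psat x b)"
  by (induction as) auto

context
  fixes L :: "('p, 'i) form set" and X :: "('w, 'p, 'i) pointed set"
  assumes sound: "sound_wrt L X"
begin

lemma psat_if_mem_logic: "a \<in> L \<Longrightarrow> x \<in> X \<Longrightarrow> psat x a"
  using sound by (simp add: sound_wrt_def)

lemma psat_eqc_cong:
  assumes "normal_logic L" "x \<in> X" "eqc L a = eqc L b"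
  shows "psat x a \<longleftrightarrow> psat x b"
proof -
  have "tautology (Iff b b)"
    by (simp add: tautology_def Iff_def Imp_def)
  then have "b \<in> eqc L b"
    using \<open>normal_logic L\<close> by (simp add: normal_logic_def eqc_def)
  then have "Iff a b \<in> L"
    using \<open>eqc L a = eqc L b\<close> by (metis eqc_def mem_Collect_eq)
  then show ?thesis
    using psat_if_mem_logic \<open>x \<in> X\<close> by fastforce
qed

lemma consistent_if_satisfied: "x \<in> X \<Longrightarrow> \<forall>b\<in>G. psat x b \<Longrightarrow> consistent L G"
  unfolding consistent_def by (metis psat_conj_list psat_if_mem_logic psat_simps(2) subset_iff)

lemma consistent_if_finitely_satisfiable:
  assumes "compact_logic L" "\<And>G0. G0 \<subseteq> G \<Longrightarrow> finite G0 \<Longrightarrow> \<exists>x\<in>X. \<forall>b\<in>G0. psat x b"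
  shows "consistent L G"
  using assms consistent_if_satisfied unfolding compact_logic_def by metis

end

definition literal :: "('p, 'i) form set \<Rightarrow> ('p, 'i) form set set \<Rightarrow> ('p, 'i) form \<Rightarrow> bool"
  where "literal L D b \<longleftrightarrow> (\<exists>a. eqc L a \<in> D \<and> (b = a \<or> b = Neg a))"

lemma cls_subset: "cls L X D x \<subseteq> X"
  by (auto simp: cls_def)

lemma mem_cls_self: "x \<in> X \<Longrightarrow> x \<in> cls L X D x"
  by (simp add: cls_def)

lemma psat_literal_cls: "literal L D b \<Longrightarrow> y \<in> cls L X D x \<Longrightarrow> psat y b \<longleftrightarrow> psat x b"
  by (auto simp: literal_def cls_def)

lemma cls_mem_denot_literal_iff:
  assumes "x \<in> X" "literal L D b"
  shows "cls L X D x \<in> denot L X D b \<longleftrightarrow> psat x b"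
proof -
  have "cls L X D x \<in> XD L X D"
    using assms(1) by (simp add: XD_def)
  then show ?thesis
    using assms mem_cls_self psat_literal_cls unfolding denot_def by blast
qed

lemma sbset_literal:
  assumes "literal L D b"
  shows "sbset L X D b = denot L X D b"
proof (intro equalityI subsetI)
  fix c assume "c \<in> sbset L X D b"
  then obtain x where "x \<in> X" "psat x b" "c = cls L X D x"
    by (auto simp: sbset_def)
  then show "c \<in> denot L X D b"
    by (simp add: cls_mem_denot_literal_iff assms)
next
  fix c assume c: "c \<in> denot L X D b"
  then obtain x where x: "x \<in> X" "c = cls L X D x"
    by (auto simp: denot_def XD_def)
  with c have "psat x b"
    by (simp add: cls_mem_denot_literal_iff assms)
  with x show "c \<in> sbset L X D b"
    by (auto simp: sbset_def)
qed

lemma TD_literals: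
  "TD L X D = topology_generated_by (insert (XD L X D) (denot L X D ` Collect (literal L D)))"
proof -
  have "{S. \<exists>a. eqc L a \<in> D \<and> (S = sbset L X D a \<or> S = sbset L X D (Neg a))}
        = sbset L X D ` Collect (literal L D)"
    unfolding literal_def by blast
  also have "\<dots> = denot L X D ` Collect (literal L D)"
    by (simp add: sbset_literal)
  finally show ?thesis
    by (simp add: TD_def)
qed

lemma topspace_TD: "topspace (TD L X D) = XD L X D"
  by (auto simp: TD_literals denot_def)

lemma denot_Conj: "denot L X D (Conj a b) = denot L X D a \<inter> denot L X D b"
  by (auto simp: denot_def)

lemma openin_TD_denot_literal_conj:
  "\<forall>b\<in>set bs. literal L D b \<Longrightarrow> openin (TD L X D) (denot L X D (conj_list bs))"
proof (induction bs)
  case Nil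
  show ?case
    using openin_topspace[of "TD L X D"] by (simp add: topspace_TD denot_def)
next
  case (Cons b bs)
  have "openin (TD L X D) (denot L X D b)"
    using Cons.prems by (simp add: TD_literals topology_generated_by_Basis)
  then show ?case
    using Cons by (simp add: denot_Conj openin_Int)
qed

lemma openin_TD_imp_denot_nbhd:
  assumes "openin (TD L X D) U" "c \<in> U"
  shows "\<exists>a. c \<in> denot L X D a \<and> denot L X D a \<subseteq> U"
proof -
  have "generate_topology_on (insert (XD L X D) (denot L X D ` Collect (literal L D))) U"
    using assms(1) by (simp add: TD_literals openin_topology_generated_by_iff)
  then show ?thesis
    using assms(2)
  proof (induction arbitrary: c)
    case (Int U V)
    then obtain a b where "c \<in> denot L X D a" "denot L X D a \<subseteq> U"
      "c \<in> denot L X D b" "denot L X D b \<subseteq> V"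
      by blast
    then show ?case
      using denot_Conj[of L X D a b] by blast
  next
    case (Basis S)
    moreover have "XD L X D = denot L X D Top"
      by (simp add: denot_def)
    ultimately show ?case
      by blast
  qed blast+
qed

context
  fixes L :: "('p, 'i) form set" and X :: "('w, 'p, 'i) pointed set" and D :: "('p, 'i) form set set"
  assumes normal: "normal_logic L" and sound: "sound_wrt L X"
begin

lemma literals_determine_formula:
  assumes repr: "representative L D" and x: "x \<in> X"
  obtains bs where "\<forall>b\<in>set bs. literal L D b \<and> psat x b"
    and "\<And>y. y \<in> X \<Longrightarrow> \<forall>b\<in>set bs. psat y b \<Longrightarrow> psat y a \<longleftrightarrow> psat x a"
proof -
  obtain S where "S \<subseteq> D" and S: "\<forall>J \<subseteq> S.
      (let B = {b. eqc L b \<in> J} \<union> {Neg b | b. eqc L b \<in> S - J}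
       in entails L B a \<or> entails L B (Neg a))"
    using repr unfolding representative_def by blast
  define J where "J = {e \<in> S. \<exists>b. e = eqc L b \<and> psat x b}"
  define B where "B = {b. eqc L b \<in> J} \<union> {Neg b | b. eqc L b \<in> S - J}"
  have B_literals: "literal L D b \<and> psat x b" if "b \<in> B" for b
  proof (cases "eqc L b \<in> J")
    case True
    then obtain b' where "eqc L b = eqc L b'" "psat x b'" "eqc L b \<in> D"
      using \<open>S \<subseteq> D\<close> by (auto simp: J_def)
    then show ?thesis
      using psat_eqc_cong[OF sound normal x, of b b'] unfolding literal_def by blast
  next
    case False
    then obtain b' where "b = Neg b'" "eqc L b' \<in> S - J"
      using \<open>b \<in> B\<close> by (auto simp: B_def)
    then show ?thesis
      using \<open>S \<subseteq> D\<close> by (auto simp: J_def literal_def)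
  qed
  have "J \<subseteq> S"
    by (auto simp: J_def)
  then have "entails L B a \<or> entails L B (Neg a)"
    using S unfolding B_def Let_def by blast
  then obtain bs where bs: "set bs \<subseteq> B"
    and decides: "Imp (conj_list bs) a \<in> L \<or> Imp (conj_list bs) (Neg a) \<in> L"
    unfolding entails_def by blast
  have bs_literals: "\<forall>b\<in>set bs. literal L D b \<and> psat x b"
    using bs B_literals by blast
  have implied: "psat z c" if "Imp (conj_list bs) c \<in> L" "z \<in> X" "\<forall>b\<in>set bs. psat z b" for z c
    using psat_if_mem_logic[OF sound that(1,2)] that(3) by simp
  have "psat y a \<longleftrightarrow> psat x a" if "y \<in> X" "\<forall>b\<in>set bs. psat y b" for y
    using decides implied[of a y] implied[of a x] implied[of "Neg a" y] implied[of "Neg a" x]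
      that x bs_literals by auto
  with bs_literals show ?thesis
    using that by blast
qed

text \<open>The complementary set B is closed under provable equivalence, the shape in which
  saturation can be applied to it.\<close>

lemma literal_cover_complement:
  assumes "C \<subseteq> denot L X D ` Collect (literal L D)"
  obtains Y Y' B where "Y \<subseteq> D" "Y' \<subseteq> D" "B = {b. eqc L b \<in> Y} \<union> {Neg b | b. eqc L b \<in> Y'}"
    and "\<And>g. g \<in> B \<Longrightarrow> \<exists>K\<in>C. \<forall>x\<in>X. psat x g \<longleftrightarrow> cls L X D x \<notin> K"
    and "\<And>K. K \<in> C \<Longrightarrow> \<exists>g\<in>B. \<forall>x\<in>X. psat x g \<longleftrightarrow> cls L X D x \<notin> K"
proof -
  define Y where "Y = {eqc L a | a. eqc L a \<in> D \<and> denot L X D (Neg a) \<in> C}"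
  define Y' where "Y' = {eqc L a | a. eqc L a \<in> D \<and> denot L X D a \<in> C}"
  define B where "B = {b. eqc L b \<in> Y} \<union> {Neg b | b. eqc L b \<in> Y'}"
  have literal: "literal L D a" "literal L D (Neg a)" if "eqc L a \<in> D" for a
    using that by (auto simp: literal_def)
  have D_subsets: "Y \<subseteq> D" "Y' \<subseteq> D"
    unfolding Y_def Y'_def by blast+
  have B_C: "\<exists>K\<in>C. \<forall>x\<in>X. psat x g \<longleftrightarrow> cls L X D x \<notin> K" if "g \<in> B" for g
  proof (cases "eqc L g \<in> Y")
    case True
    then obtain a where a: "eqc L a \<in> D" "eqc L g = eqc L a" "denot L X D (Neg a) \<in> C"
      unfolding Y_def by blast
    have "\<forall>x\<in>X. psat x g \<longleftrightarrow> cls L X D x \<notin> denot L X D (Neg a)"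
      using psat_eqc_cong[OF sound normal _ a(2)]
        cls_mem_denot_literal_iff[where X=X, OF _ literal(2)[OF a(1)]] by simp
    with a(3) show ?thesis
      by blast
  next
    case False
    then obtain b a where a: "g = Neg b" "eqc L a \<in> D" "eqc L b = eqc L a" "denot L X D a \<in> C"
      using \<open>g \<in> B\<close> unfolding B_def Y'_def by blast
    have "\<forall>x\<in>X. psat x g \<longleftrightarrow> cls L X D x \<notin> denot L X D a"
      using psat_eqc_cong[OF sound normal _ a(3)]
        cls_mem_denot_literal_iff[where X=X, OF _ literal(1)[OF a(2)]] a(1) by simp
    with a(4) show ?thesis
      by blast
  qed
  have C_B: "\<exists>g\<in>B. \<forall>x\<in>X. psat x g \<longleftrightarrow> cls L X D x \<notin> K" if "K \<in> C" for K
  proof -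
    obtain a where a: "eqc L a \<in> D" "K = denot L X D a \<or> K = denot L X D (Neg a)"
      using \<open>K \<in> C\<close> assms unfolding literal_def by blast
    then have "Neg a \<in> B \<and> K = denot L X D a \<or> a \<in> B \<and> K = denot L X D (Neg a)"
      using \<open>K \<in> C\<close> unfolding B_def Y_def Y'_def by blast
    moreover have "\<forall>x\<in>X. psat x (Neg a) \<longleftrightarrow> cls L X D x \<notin> denot L X D a"
      and "\<forall>x\<in>X. psat x a \<longleftrightarrow> cls L X D x \<notin> denot L X D (Neg a)"
      using cls_mem_denot_literal_iff[where X=X, OF _ literal(1)[OF a(1)]]
        cls_mem_denot_literal_iff[where X=X, OF _ literal(2)[OF a(1)]] by simp_all
    ultimately show ?thesis
      by blast
  qed
  show ?thesis
    by (rule that[OF D_subsets B_def B_C C_B])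
qed

lemma literal_cover_finite_subcover:
  assumes "compact_logic L" "saturated L X D"
    and C: "C \<subseteq> denot L X D ` Collect (literal L D)" "XD L X D \<subseteq> \<Union>C"
  shows "\<exists>C'. finite C' \<and> C' \<subseteq> C \<and> XD L X D \<subseteq> \<Union>C'"
proof (rule ccontr)
  assume no_subcover: "\<not> ?thesis"
  obtain Y Y' B where B: "Y \<subseteq> D" "Y' \<subseteq> D" "B = {b. eqc L b \<in> Y} \<union> {Neg b | b. eqc L b \<in> Y'}"
    and B_C: "\<And>g. g \<in> B \<Longrightarrow> \<exists>K\<in>C. \<forall>x\<in>X. psat x g \<longleftrightarrow> cls L X D x \<notin> K"
    and C_B: "\<And>K. K \<in> C \<Longrightarrow> \<exists>g\<in>B. \<forall>x\<in>X. psat x g \<longleftrightarrow> cls L X D x \<notin> K"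
    using literal_cover_complement[OF C(1)] by blast
  have "consistent L B"
  proof (rule consistent_if_finitely_satisfiable[OF sound \<open>compact_logic L\<close>])
    fix G0 assume "G0 \<subseteq> B" "finite G0"
    then have "\<forall>g\<in>G0. \<exists>K. K \<in> C \<and> (\<forall>x\<in>X. psat x g \<longleftrightarrow> cls L X D x \<notin> K)"
      using B_C by blast
    then obtain f where f: "\<forall>g\<in>G0. f g \<in> C \<and> (\<forall>x\<in>X. psat x g \<longleftrightarrow> cls L X D x \<notin> f g)"
      by metis
    moreover have "finite (f ` G0)"
      using \<open>finite G0\<close> by simp
    ultimately have "\<not> XD L X D \<subseteq> \<Union> (f ` G0)"
      using no_subcover by blast
    then obtain x where "x \<in> X" "cls L X D x \<notin> \<Union> (f ` G0)"
      unfolding XD_def by blast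
    then show "\<exists>x\<in>X. \<forall>g\<in>G0. psat x g"
      using f by blast
  qed
  moreover have "consistent L B \<longrightarrow> (\<exists>x\<in>X. \<forall>g\<in>B. psat x g)"
    using \<open>saturated L X D\<close> B(1,2) unfolding saturated_def Let_def B(3) by blast
  ultimately obtain x where x: "x \<in> X" "\<forall>g\<in>B. psat x g"
    by blast
  moreover obtain K where "K \<in> C" "cls L X D x \<in> K"
    using C(2) x(1) unfolding XD_def by blast
  ultimately show False
    using C_B by blast
qed

lemma compact_space_TD:
  assumes "compact_logic L" "saturated L X D"
  shows "compact_space (TD L X D)"
  unfolding TD_literals
proof (rule compact_space_topology_generated_by)
  let ?S = "insert (XD L X D) (denot L X D ` Collect (literal L D))"
  fix C assume C: "C \<subseteq> ?S" "\<Union>C = \<Union>?S"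
  have "denot L X D b \<subseteq> XD L X D" for b
    by (auto simp: denot_def)
  then have Union_S: "\<Union>?S = XD L X D"
    by blast
  show "\<exists>C'. finite C' \<and> C' \<subseteq> C \<and> \<Union>C' = \<Union>?S"
  proof (cases "XD L X D \<in> C")
    case True
    then show ?thesis
      using Union_S by (intro exI[of _ "{XD L X D}"]) simp
  next
    case False
    then have "C \<subseteq> denot L X D ` Collect (literal L D)"
      using C(1) by blast
    moreover have "XD L X D \<subseteq> \<Union>C"
      using C(2) Union_S by simp
    ultimately have "\<exists>C'. finite C' \<and> C' \<subseteq> C \<and> XD L X D \<subseteq> \<Union>C'"
      by (rule literal_cover_finite_subcover[OF assms])
    then obtain C' where C': "finite C'" "C' \<subseteq> C" "XD L X D \<subseteq> \<Union>C'"
      by blast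
    have "\<Union>C' \<subseteq> XD L X D"
      using C'(2) C(2) Union_S by blast
    then have "\<Union>C' = \<Union>?S"
      unfolding Union_S using C'(3) by (rule subset_antisym)
    with C'(1,2) show ?thesis
      by blast
  qed
qed

context
  assumes repr: "representative L D"
begin

lemma cls_mem_denot_iff: "x \<in> X \<Longrightarrow> cls L X D x \<in> denot L X D a \<longleftrightarrow> psat x a"
proof -
  assume x: "x \<in> X"
  obtain bs where bs: "\<forall>b\<in>set bs. literal L D b \<and> psat x b"
    and determine: "\<And>y. y \<in> X \<Longrightarrow> \<forall>b\<in>set bs. psat y b \<Longrightarrow> psat y a \<longleftrightarrow> psat x a"
    using literals_determine_formula[OF repr x] by blast
  have "psat y a \<longleftrightarrow> psat x a" if "y \<in> cls L X D x" for y
    using that bs determine cls_subset psat_literal_cls by blast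
  moreover have "cls L X D x \<in> XD L X D"
    using x by (simp add: XD_def)
  ultimately show ?thesis
    using x mem_cls_self unfolding denot_def by blast
qed

lemma denot_Neg: "denot L X D (Neg a) = XD L X D - denot L X D a"
proof -
  have "c \<in> denot L X D (Neg a) \<longleftrightarrow> c \<in> XD L X D - denot L X D a" for c
  proof (cases "c \<in> XD L X D")
    case True
    then obtain x where "x \<in> X" "c = cls L X D x"
      by (auto simp: XD_def)
    then show ?thesis
      using True by (simp add: cls_mem_denot_iff)
  qed (simp add: denot_def)
  then show ?thesis
    by blast
qed

lemma denot_Disj: "denot L X D (Disj a b) = denot L X D a \<union> denot L X D b"
proof -
  have "c \<in> denot L X D (Disj a b) \<longleftrightarrow> c \<in> denot L X D a \<union> denot L X D b" for c
  proof (cases "c \<in> XD L X D")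
    case True
    then obtain x where "x \<in> X" "c = cls L X D x"
      by (auto simp: XD_def)
    then show ?thesis
      by (simp add: cls_mem_denot_iff)
  qed (simp add: denot_def)
  then show ?thesis
    by blast
qed

lemma openin_TD_denot: "openin (TD L X D) (denot L X D a)"
proof (subst openin_subopen, intro ballI)
  fix c assume c: "c \<in> denot L X D a"
  then obtain x where x: "x \<in> X" "c = cls L X D x"
    by (auto simp: denot_def XD_def)
  with c have "psat x a"
    by (simp add: cls_mem_denot_iff)
  obtain bs where bs: "\<forall>b\<in>set bs. literal L D b \<and> psat x b"
    and determine: "\<And>y. y \<in> X \<Longrightarrow> \<forall>b\<in>set bs. psat y b \<Longrightarrow> psat y a \<longleftrightarrow> psat x a"
    using literals_determine_formula[OF repr x(1)] by blast
  have "denot L X D (conj_list bs) \<subseteq> denot L X D a"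
  proof
    fix c' assume c': "c' \<in> denot L X D (conj_list bs)"
    then obtain y where "y \<in> X" "c' = cls L X D y"
      by (auto simp: denot_def XD_def)
    then show "c' \<in> denot L X D a"
      using c' x \<open>psat x a\<close> determine by (simp add: cls_mem_denot_iff)
  qed
  moreover have "c \<in> denot L X D (conj_list bs)"
    using x bs by (simp add: cls_mem_denot_iff)
  moreover have "openin (TD L X D) (denot L X D (conj_list bs))"
    using bs by (simp add: openin_TD_denot_literal_conj)
  ultimately show "\<exists>U. openin (TD L X D) U \<and> c \<in> U \<and> U \<subseteq> denot L X D a"
    by blast
qed

lemma clopen_in_TD_denot: "clopen_in (TD L X D) (denot L X D a)"
proof -
  have "denot L X D a \<subseteq> XD L X D"
    by (auto simp: denot_def)
  then show ?thesis
    unfolding clopen_in_def closedin_def topspace_TD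
    using openin_TD_denot[of a] openin_TD_denot[of "Neg a"] by (simp add: denot_Neg)
qed

lemma finite_Union_denot:
  "finite F \<Longrightarrow> F \<subseteq> range (denot L X D) \<Longrightarrow> \<Union>F \<in> range (denot L X D)"
proof (induction F rule: finite_induct)
  case empty
  have "denot L X D (Neg Top) = {}"
    by (simp add: denot_Neg) (simp add: denot_def)
  then show ?case
    by (metis Union_empty rangeI)
next
  case (insert A F)
  then obtain a b where "A = denot L X D a" "\<Union>F = denot L X D b"
    by auto
  then show ?case
    by (metis Union_insert denot_Disj rangeI)
qed

lemma clopen_in_TD_imp_denot:
  assumes "compact_logic L" "saturated L X D" "clopen_in (TD L X D) Y"
  shows "\<exists>a. Y = denot L X D a"
proof -
  have "compactin (TD L X D) Y"
    using closedin_compact_space[OF compact_space_TD[OF assms(1,2)]] assms(3)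
    by (simp add: clopen_in_def)
  moreover define U where "U = {A \<in> range (denot L X D). A \<subseteq> Y}"
  have "\<forall>A\<in>U. openin (TD L X D) A"
    using openin_TD_denot by (auto simp: U_def)
  moreover have "Y \<subseteq> \<Union>U"
  proof
    fix c assume "c \<in> Y"
    then obtain a where "c \<in> denot L X D a" "denot L X D a \<subseteq> Y"
      using openin_TD_imp_denot_nbhd assms(3) unfolding clopen_in_def by blast
    then show "c \<in> \<Union>U"
      unfolding U_def by blast
  qed
  ultimately obtain F where F: "finite F" "F \<subseteq> U" "Y \<subseteq> \<Union>F"
    unfolding compactin_def by blast
  have "F \<subseteq> range (denot L X D)"
    using F(2) by (auto simp: U_def)
  then have "\<Union>F \<in> range (denot L X D)"
    by (rule finite_Union_denot[OF F(1)])
  moreover have "\<Union>F = Y"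
    using F(2,3) by (auto simp: U_def)
  ultimately show ?thesis
    by (metis rangeE)
qed

lemma reflects_TD:
  assumes "compact_logic L" "saturated L X D"
  shows "reflects L X D"
  unfolding reflects_def using clopen_in_TD_imp_denot[OF assms] clopen_in_TD_denot by blast

end

end

theorem proposition25:
  fixes L :: "('p::countable, 'i::countable) form set"
    and X :: "('w, 'p, 'i) pointed set"
    and D :: "('p, 'i) form set set"
  assumes "normal_logic L"
    and "sound_wrt L X"
    and "D \<subseteq> Lbold L"
    and "compact_logic L"
    and "representative L D"
  shows "(\<forall>a. clopen_in (TD L X D) (denot L X D a))
         \<and> (saturated L X D \<longrightarrow> reflects L X D)"
  using clopen_in_TD_denot[OF assms(1,2,5)] reflects_TD[OF assms(1,2,5,4)] by blast

end
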